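(* For every natural number $n\geq 2$: (i) $\chi_d^t(F_n\star K_n)=n+3$; (ii) $\chi_d^t(F_n\star C_{2n})=5$.
   Context: All graphs are simple and finite. A total dominator coloring (TD-coloring) of a graph $G$ with no isolated vertex is a proper vertex coloring of $G$ in which every vertex of $G$ is adjacent to every vertex of some color class. The total dominator chromatic number $\chi_d^t(G)$ is the minimum number of colors in a TD-coloring of $G$. The neighbourhood corona $G_1\star G_2$ is the graph obtained by taking one copy of $G_1$ and $|V(G_1)|$ copies of $G_2$, and, for each $i$, joining every neighbour (in $G_1$) of the $i$-th vertex of $G_1$ to every vertex of the $i$-th copy of $G_2$. The friendship graph $F_n$ ($n\ge 2$) is obtained by joining $n$ copies of the cycle $C_3$ at a common vertex. $K_n$ is the complete graph and $C_{2n}$ the cycle on $2n$ vertices. *)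

theory Defs
  imports Main
begin

text \<open>A simple graph: a finite vertex set together with an adjacency relation
  (only its restriction to the vertex set matters; it is symmetric and irreflexive
  for all graphs constructed below).\<close>
type_synonym 'a graph = "'a set \<times> ('a \<Rightarrow> 'a \<Rightarrow> bool)"

definition verts :: "'a graph \<Rightarrow> 'a set" where "verts G = fst G"
definition adj :: "'a graph \<Rightarrow> 'a \<Rightarrow> 'a \<Rightarrow> bool" where "adj G = snd G"

definition proper_coloring :: "'a graph \<Rightarrow> ('a \<Rightarrow> nat) \<Rightarrow> bool" where
  "proper_coloring G c \<longleftrightarrow>
     (\<forall>u\<in>verts G. \<forall>v\<in>verts G. adj G u v \<longrightarrow> c u \<noteq> c v)"

definition td_coloring :: "'a graph \<Rightarrow> ('a \<Rightarrow> nat) \<Rightarrow> bool" where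
  "td_coloring G c \<longleftrightarrow> proper_coloring G c \<and>
     (\<forall>v\<in>verts G. \<exists>u\<in>verts G. \<forall>w\<in>verts G. c w = c u \<longrightarrow> adj G v w)"

definition td_chrom :: "'a graph \<Rightarrow> nat" where
  "td_chrom G = (LEAST k. \<exists>c. td_coloring G c \<and> card (c ` verts G) = k)"

definition complete_graph :: "nat \<Rightarrow> nat graph" where
  "complete_graph n = ({0..<n}, \<lambda>i j. i \<noteq> j)"

definition cycle_graph :: "nat \<Rightarrow> nat graph" where
  "cycle_graph m = ({0..<m}, \<lambda>i j. i \<noteq> j \<and> (j = (i + 1) mod m \<or> i = (j + 1) mod m))"

text \<open>Friendship graph F_n: center 0, triangles {0, 2i-1, 2i} for i = 1..n.\<close>
definition friendship_graph :: "nat \<Rightarrow> nat graph" where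
  "friendship_graph n = ({0..2*n},
     \<lambda>i j. i \<noteq> j \<and> (i = 0 \<or> j = 0 \<or> (odd (min i j) \<and> max i j = min i j + 1)))"

text \<open>Neighbourhood corona G1 * G2: vertices Inl v (copy of G1) and Inr (v, x)
  (vertex x of the copy of G2 attached to v).\<close>
definition ncorona :: "'a graph \<Rightarrow> 'b graph \<Rightarrow> ('a + ('a \<times> 'b)) graph" where
  "ncorona G H = (Inl ` verts G \<union> Inr ` (verts G \<times> verts H),
     \<lambda>p q. case (p, q) of
        (Inl u, Inl v) \<Rightarrow> adj G u v
      | (Inr (i, x), Inr (j, y)) \<Rightarrow> i = j \<and> adj H x y
      | (Inl u, Inr (i, x)) \<Rightarrow> adj G u i
      | (Inr (i, x), Inl u) \<Rightarrow> adj G i u)"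

end

theory Submission
  imports Defs
begin

text \<open>Both parts are instances of \<open>\<chi>\<^sub>d\<^sup>t(F\<^sub>n \<star> H) = k + 3\<close> for any H containing a clique of
  size k \<ge> 1 and properly coloured with k colours. Every non-central vertex of \<open>F\<^sub>n\<close> is adjacent to
  the whole copy of H attached to the centre, so that clique needs k colours avoiding those of a
  triangle {1, 2}; one more colour is forced by a vertex of the copy attached to 1, whose
  neighbourhood contains no colour class otherwise. Conversely, colour every copy of H with the
  k colours, the odd and the even non-central vertices of \<open>F\<^sub>n\<close> with one new colour each, and the
  centre with a last one.\<close>

definition clique :: "'a graph \<Rightarrow> 'a set \<Rightarrow> bool" where
  "clique G B \<longleftrightarrow> B \<subseteq> verts G \<and> (\<forall>x\<in>B. \<forall>y\<in>B. x \<noteq> y \<longrightarrow> adj G x y)"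

lemma td_coloring_proper: "td_coloring G c \<Longrightarrow> proper_coloring G c"
  by (simp add: td_coloring_def)

lemma proper_coloringD:
  "\<lbrakk>proper_coloring G c; u \<in> verts G; v \<in> verts G; adj G u v\<rbrakk> \<Longrightarrow> c u \<noteq> c v"
  by (simp add: proper_coloring_def)

lemma td_chrom_eqI:
  assumes "td_coloring G c" "card (c ` verts G) = m"
    and "\<And>c. td_coloring G c \<Longrightarrow> m \<le> card (c ` verts G)"
  shows "td_chrom G = m"
  unfolding td_chrom_def using assms by (intro Least_equality) blast+

lemma verts_ncorona: "verts (ncorona G H) = Inl ` verts G \<union> Inr ` (verts G \<times> verts H)"
  by (simp add: ncorona_def verts_def)

lemma adj_ncorona [simp]:
  "adj (ncorona G H) (Inl u) (Inl v) = adj G u v"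
  "adj (ncorona G H) (Inr (i, x)) (Inr (j, y)) = (i = j \<and> adj H x y)"
  "adj (ncorona G H) (Inl u) (Inr (i, x)) = adj G u i"
  "adj (ncorona G H) (Inr (i, x)) (Inl u) = adj G i u"
  by (simp_all add: ncorona_def adj_def)

lemma verts_friendship_graph: "verts (friendship_graph n) = {0..2 * n}"
  by (simp add: friendship_graph_def verts_def)

lemma adj_friendship_graph:
  "adj (friendship_graph n) i j \<longleftrightarrow>
     i \<noteq> j \<and> (i = 0 \<or> j = 0 \<or> (odd (min i j) \<and> max i j = min i j + 1))"
  by (simp add: friendship_graph_def adj_def)

lemma finite_verts_ncorona_friendship:
  "finite (verts H) \<Longrightarrow> finite (verts (ncorona (friendship_graph n) H))"
  by (simp add: verts_ncorona verts_friendship_graph)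

lemma proper_coloring_ncorona_friendship_Inl_notin_centre_copy:
  assumes proper: "proper_coloring (ncorona (friendship_graph n) H) c"
    and a: "1 \<le> a" "a \<le> 2 * n"
  shows "c (Inl a) \<notin> c ` Inr ` ({0} \<times> verts H)"
proof
  assume "c (Inl a) \<in> c ` Inr ` ({0} \<times> verts H)"
  then obtain y where "y \<in> verts H" "c (Inl a) = c (Inr (0, y))" by auto
  moreover have "c (Inl a) \<noteq> c (Inr (0, y))" if "y \<in> verts H"
    using a that by (intro proper_coloringD[OF proper])
      (auto simp: verts_ncorona verts_friendship_graph adj_friendship_graph)
  ultimately show False by blast
qed

text \<open>The neighbours of \<open>Inr (1, x\<^sub>0)\<close> are \<open>Inl 0\<close>, \<open>Inl 2\<close> and vertices of the copy of H at 1.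
  If no further colour were used, the colours of the triangle {1, 2} would also be those of the
  triangle {3, 4}, so no colour class could lie in that neighbourhood.\<close>
lemma td_coloring_ncorona_friendship_extra_colour:
  assumes n: "n \<ge> 2" and x0: "x0 \<in> verts H"
    and td: "td_coloring (ncorona (friendship_graph n) H) c"
  defines "C \<equiv> c ` Inr ` ({0} \<times> verts H) \<union> {c (Inl 1), c (Inl 2)}"
  shows "\<exists>r \<in> c ` verts (ncorona (friendship_graph n) H). r \<notin> C"
proof (rule ccontr)
  let ?G = "ncorona (friendship_graph n) H"
  let ?V = "verts ?G"
  have proper: "proper_coloring ?G c" using td by (rule td_coloring_proper)
  have Inl_in: "Inl a \<in> ?V" if "a \<le> 4" for a
    using that n by (simp add: verts_ncorona verts_friendship_graph)
  assume "\<not> ?thesis"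
  then have sub: "c ` ?V \<subseteq> C" by blast
  have neq: "c (Inl 3) \<noteq> c (Inl 4)"
    by (intro proper_coloringD[OF proper] Inl_in) (simp_all add: adj_friendship_graph)
  have in_triangle_12: "c (Inl a) \<in> {c (Inl 1), c (Inl 2)}" if "a \<in> {3, 4}" for a
  proof -
    have "c (Inl a) \<in> C" using sub Inl_in[of a] that by auto
    moreover have "c (Inl a) \<notin> c ` Inr ` ({0} \<times> verts H)"
      using that n by (intro proper_coloring_ncorona_friendship_Inl_notin_centre_copy[OF proper]) auto
    ultimately show ?thesis by (simp add: C_def)
  qed
  have far: "r = c (Inl 3) \<or> r = c (Inl 4)" if "r \<in> {c (Inl 1), c (Inl 2)}" for r
  proof -
    have "c (Inl 3) \<in> {c (Inl 1), c (Inl 2)}" "c (Inl 4) \<in> {c (Inl 1), c (Inl 2)}"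
      by (rule in_triangle_12; simp)+
    with that neq show ?thesis by (metis insertE empty_iff)
  qed
  have "Inr (1, x0) \<in> ?V" using x0 n by (auto simp: verts_ncorona verts_friendship_graph)
  then obtain u where u: "u \<in> ?V" and "\<forall>w\<in>?V. c w = c u \<longrightarrow> adj ?G (Inr (1, x0)) w"
    using td unfolding td_coloring_def by blast
  then have dom: "\<And>w. w \<in> ?V \<Longrightarrow> c w = c u \<Longrightarrow> adj ?G (Inr (1, x0)) w" by blast
  have "c u \<in> C" using sub u by blast
  then show False
  proof (unfold C_def, elim UnE)
    assume "c u \<in> c ` Inr ` ({0} \<times> verts H)"
    then obtain y where "y \<in> verts H" "c (Inr (0, y)) = c u" by auto
    then have "adj ?G (Inr (1, x0)) (Inr (0, y))"
      by (intro dom) (auto simp: verts_ncorona verts_friendship_graph)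
    then show False by simp
  next
    assume "c u \<in> {c (Inl 1), c (Inl 2)}"
    then have "c (Inl 3) = c u \<or> c (Inl 4) = c u" using far by metis
    then have "adj ?G (Inr (1, x0)) (Inl 3) \<or> adj ?G (Inr (1, x0)) (Inl 4)"
      using dom[OF Inl_in[of 3]] dom[OF Inl_in[of 4]] by auto
    then show False by (simp add: adj_friendship_graph)
  qed
qed

lemma card_td_coloring_ncorona_friendship_ge:
  assumes n: "n \<ge> 2" and fin: "finite (verts H)" and B: "clique H B" "B \<noteq> {}"
    and td: "td_coloring (ncorona (friendship_graph n) H) c"
  shows "card B + 3 \<le> card (c ` verts (ncorona (friendship_graph n) H))"
proof -
  let ?V = "verts (ncorona (friendship_graph n) H)"
  have proper: "proper_coloring (ncorona (friendship_graph n) H) c"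
    using td by (rule td_coloring_proper)
  have BH: "B \<subseteq> verts H" using B(1) by (simp add: clique_def)
  define C0 where "C0 = c ` Inr ` ({0} \<times> verts H)"
  have "inj_on (\<lambda>x. c (Inr (0, x))) B"
  proof (rule inj_onI, rule ccontr)
    fix x y assume xy: "x \<in> B" "y \<in> B" "c (Inr (0, x)) = c (Inr (0, y))" "x \<noteq> y"
    have "c (Inr (0, x)) \<noteq> c (Inr (0, y))"
      using xy BH B(1) by (intro proper_coloringD[OF proper])
        (auto simp: clique_def verts_ncorona verts_friendship_graph)
    with xy show False by simp
  qed
  then have "card B = card ((\<lambda>x. c (Inr (0, x))) ` B)" by (simp add: card_image)
  also have "\<dots> \<le> card C0"
    using BH fin by (intro card_mono) (auto simp: C0_def)
  finally have card_C0: "card B \<le> card C0" .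
  obtain x0 where "x0 \<in> verts H" using B(2) BH by blast
  then obtain r where r: "r \<in> c ` ?V" "r \<notin> C0 \<union> {c (Inl 1), c (Inl 2)}"
    using td_coloring_ncorona_friendship_extra_colour[OF n _ td] unfolding C0_def by blast
  have "c (Inl 1) \<noteq> c (Inl 2)"
    using n by (intro proper_coloringD[OF proper])
      (auto simp: verts_ncorona verts_friendship_graph adj_friendship_graph)
  moreover have "c (Inl a) \<notin> C0" if "a \<in> {1, 2}" for a
    using that n unfolding C0_def
    by (intro proper_coloring_ncorona_friendship_Inl_notin_centre_copy[OF proper]) auto
  ultimately have "card C0 + 3 = card (insert r (insert (c (Inl 1)) (insert (c (Inl 2)) C0)))"
    using r fin by (simp add: C0_def)
  also have "\<dots> \<le> card (c ` ?V)"
    using r n fin finite_verts_ncorona_friendship[OF fin]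
    by (intro card_mono) (auto simp: C0_def verts_ncorona verts_friendship_graph)
  finally show ?thesis using card_C0 by simp
qed

definition friendship_corona_coloring :: "nat \<Rightarrow> ('b \<Rightarrow> nat) \<Rightarrow> nat + nat \<times> 'b \<Rightarrow> nat" where
  "friendship_corona_coloring k g = (\<lambda>p. case p of
      Inl v \<Rightarrow> (if v = 0 then k + 2 else if odd v then k else k + 1)
    | Inr (v, x) \<Rightarrow> g x)"

lemma friendship_corona_coloring_simps [simp]:
  "friendship_corona_coloring k g (Inl v) = (if v = 0 then k + 2 else if odd v then k else k + 1)"
  "friendship_corona_coloring k g (Inr (v, x)) = g x"
  by (simp_all add: friendship_corona_coloring_def)

context
  fixes H :: "'b graph" and g :: "'b \<Rightarrow> nat" and k :: nat
  assumes g_proper: "proper_coloring H g" and g_range: "g ` verts H = {0..<k}"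
begin

private lemma g_less: "x \<in> verts H \<Longrightarrow> g x < k"
  using g_range by auto

lemma proper_coloring_friendship_corona:
  "proper_coloring (ncorona (friendship_graph n) H) (friendship_corona_coloring k g)"
  unfolding proper_coloring_def
proof (intro ballI impI)
  fix u v
  assume u: "u \<in> verts (ncorona (friendship_graph n) H)"
    and v: "v \<in> verts (ncorona (friendship_graph n) H)"
    and uv: "adj (ncorona (friendship_graph n) H) u v"
  show "friendship_corona_coloring k g u \<noteq> friendship_corona_coloring k g v"
  proof (cases u; cases v)
    fix a b assume "u = Inl a" "v = Inl b"
    with uv show ?thesis by (auto simp: adj_friendship_graph min_def max_def split: if_splits)
  next
    fix a b assume "u = Inl a" "v = Inr b"
    with v show ?thesis by (cases b) (auto simp: verts_ncorona dest: g_less)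
  next
    fix a b assume "u = Inr a" "v = Inl b"
    with u show ?thesis by (cases a) (auto simp: verts_ncorona dest: g_less)
  next
    fix a b assume "u = Inr a" "v = Inr b"
    with u v uv show ?thesis
      using proper_coloringD[OF g_proper] by (cases a; cases b) (auto simp: verts_ncorona)
  qed
qed

text \<open>The odd class of \<open>F\<^sub>n\<close> dominates the centre and the copy of H at the centre; the centre
  alone dominates everything else.\<close>
lemma td_coloring_friendship_corona:
  assumes "n \<ge> 1"
  shows "td_coloring (ncorona (friendship_graph n) H) (friendship_corona_coloring k g)"
proof -
  let ?G = "ncorona (friendship_graph n) H"
  let ?V = "verts ?G"
  let ?c = "friendship_corona_coloring k g"
  have in_V: "Inl 1 \<in> ?V" "Inl 0 \<in> ?V"
    using assms by (auto simp: verts_ncorona verts_friendship_graph)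
  have odd_class: "\<exists>b. w = Inl b \<and> odd b" if "w \<in> ?V" "?c w = k" for w
    using that by (auto simp: verts_ncorona split: if_splits dest: g_less)
  have centre_class: "w = Inl 0" if "w \<in> ?V" "?c w = k + 2" for w
    using that by (auto simp: verts_ncorona split: if_splits dest: g_less)
  have "\<exists>u\<in>?V. \<forall>w\<in>?V. ?c w = ?c u \<longrightarrow> adj ?G v w" for v
  proof (cases "v = Inl 0 \<or> (\<exists>x. v = Inr (0, x))")
    case True
    show ?thesis
    proof (rule bexI[OF _ in_V(1)], intro ballI impI)
      fix w assume "w \<in> ?V" "?c w = ?c (Inl 1)"
      then obtain b where "w = Inl b" "odd b" using odd_class by auto
      with True odd_pos show "adj ?G v w" by (auto simp: adj_friendship_graph)
    qed
  next
    case False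
    then have "(\<exists>a. v = Inl a \<and> a \<noteq> 0) \<or> (\<exists>a x. v = Inr (a, x) \<and> a \<noteq> 0)"
      by (cases v) auto
    show ?thesis
    proof (rule bexI[OF _ in_V(2)], intro ballI impI)
      fix w assume "w \<in> ?V" "?c w = ?c (Inl 0)"
      then have "w = Inl 0" using centre_class by simp
      with \<open>(\<exists>a. v = Inl a \<and> a \<noteq> 0) \<or> _\<close> show "adj ?G v w"
        by (auto simp: adj_friendship_graph)
    qed
  qed
  then show ?thesis
    by (simp add: td_coloring_def proper_coloring_friendship_corona)
qed

lemma card_friendship_corona_coloring:
  assumes "n \<ge> 1" "verts H \<noteq> {}"
  shows "card (friendship_corona_coloring k g ` verts (ncorona (friendship_graph n) H)) = k + 3"
proof -
  let ?c = "friendship_corona_coloring k g"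
  have "?c ` Inr ` ({0..2 * n} \<times> verts H) = g ` verts H"
    using assms(2) by (auto simp: image_image image_iff)
  moreover have "?c ` Inl ` {0..2 * n} = {k, k + 1, k + 2}"
  proof
    have "Inl 0 \<in> Inl ` {0..2 * n}" "Inl 1 \<in> Inl ` {0..2 * n}" "Inl 2 \<in> Inl ` {0..2 * n}"
      using assms(1) by auto
    then show "{k, k + 1, k + 2} \<subseteq> ?c ` Inl ` {0..2 * n}"
      by (metis (no_types, lifting) empty_subsetI friendship_corona_coloring_simps(1) image_eqI
          insert_subset odd_one even_numeral one_neq_zero zero_neq_numeral)
  qed (auto simp: image_subset_iff)
  ultimately have "?c ` verts (ncorona (friendship_graph n) H) = {0..<k + 3}"
    using g_range by (auto simp: verts_ncorona verts_friendship_graph image_Un)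
  then show ?thesis by simp
qed

end

theorem td_chrom_ncorona_friendship:
  assumes "n \<ge> 2" "finite (verts H)" "clique H B" "B \<noteq> {}"
    and "proper_coloring H g" "g ` verts H = {0..<card B}"
  shows "td_chrom (ncorona (friendship_graph n) H) = card B + 3"
proof (rule td_chrom_eqI)
  show "td_coloring (ncorona (friendship_graph n) H) (friendship_corona_coloring (card B) g)"
    using assms by (intro td_coloring_friendship_corona) auto
  have "verts H \<noteq> {}" using assms(3,4) by (auto simp: clique_def)
  then show "card (friendship_corona_coloring (card B) g ` verts (ncorona (friendship_graph n) H))
      = card B + 3"
    using assms by (intro card_friendship_corona_coloring) auto
qed (rule card_td_coloring_ncorona_friendship_ge[OF assms(1-4)])

lemma verts_complete_graph: "verts (complete_graph n) = {0..<n}"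
  by (simp add: complete_graph_def verts_def)

lemma adj_complete_graph: "adj (complete_graph n) x y \<longleftrightarrow> x \<noteq> y"
  by (simp add: complete_graph_def adj_def)

lemma verts_cycle_graph: "verts (cycle_graph m) = {0..<m}"
  by (simp add: cycle_graph_def verts_def)

lemma adj_cycle_graph:
  "adj (cycle_graph m) x y \<longleftrightarrow> x \<noteq> y \<and> (y = (x + 1) mod m \<or> x = (y + 1) mod m)"
  by (simp add: cycle_graph_def adj_def)

lemma parity_Suc_mod_even:
  assumes "(a::nat) < 2 * n"
  shows "Suc a mod (2 * n) mod 2 \<noteq> a mod 2"
proof (cases "Suc a = 2 * n")
  case True
  then have "a mod 2 = 1" by presburger
  with True show ?thesis by simp
next
  case False
  then have "Suc a mod (2 * n) = Suc a" using assms by simp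
  moreover have "Suc a mod 2 \<noteq> a mod 2" by presburger
  ultimately show ?thesis by simp
qed

lemma proper_coloring_cycle_parity: "proper_coloring (cycle_graph (2 * n)) (\<lambda>x. x mod 2)"
  unfolding proper_coloring_def
proof (intro ballI impI)
  fix x y
  assume "x \<in> verts (cycle_graph (2 * n))" "y \<in> verts (cycle_graph (2 * n))"
    and "adj (cycle_graph (2 * n)) x y"
  then show "x mod 2 \<noteq> y mod 2"
    using parity_Suc_mod_even[of x n] parity_Suc_mod_even[of y n]
    by (auto simp: verts_cycle_graph adj_cycle_graph)
qed

lemma parity_range_cycle:
  assumes "n \<ge> 1"
  shows "(\<lambda>x. x mod 2) ` verts (cycle_graph (2 * n)) = {0..<2}"
proof
  have "x mod 2 \<in> (\<lambda>x. x mod 2) ` {0..<2 * n}" if "x < 2" for x :: nat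
    using that assms by (intro imageI) auto
  then show "{0..<2} \<subseteq> (\<lambda>x. x mod 2) ` verts (cycle_graph (2 * n))"
    by (auto simp: verts_cycle_graph)
qed (auto simp: verts_cycle_graph)

theorem mainTheorem5:
  fixes n :: nat
  assumes "n \<ge> 2"
  shows "td_chrom (ncorona (friendship_graph n) (complete_graph n)) = n + 3
       \<and> td_chrom (ncorona (friendship_graph n) (cycle_graph (2 * n))) = 5"
proof
  have "clique (complete_graph n) {0..<n}"
    by (simp add: clique_def verts_complete_graph adj_complete_graph)
  moreover have "proper_coloring (complete_graph n) id"
    by (simp add: proper_coloring_def adj_complete_graph)
  ultimately have "td_chrom (ncorona (friendship_graph n) (complete_graph n)) = card {0..<n} + 3"
    using assms by (intro td_chrom_ncorona_friendship) (auto simp: verts_complete_graph)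
  then show "td_chrom (ncorona (friendship_graph n) (complete_graph n)) = n + 3" by simp
next
  have "clique (cycle_graph (2 * n)) {0, 1}"
    using assms by (simp add: clique_def verts_cycle_graph adj_cycle_graph)
  moreover have "(\<lambda>x. x mod 2) ` verts (cycle_graph (2 * n)) = {0..<card {0, 1 :: nat}}"
    using parity_range_cycle[of n] assms by (simp add: numeral_2_eq_2)
  ultimately have
    "td_chrom (ncorona (friendship_graph n) (cycle_graph (2 * n))) = card {0, 1 :: nat} + 3"
    using assms proper_coloring_cycle_parity
    by (intro td_chrom_ncorona_friendship) (auto simp: verts_cycle_graph)
  then show "td_chrom (ncorona (friendship_graph n) (cycle_graph (2 * n))) = 5" by simp
qed

end
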